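(* Let $f\in\mathbb{R}[\mathbf{x}]$, $\mathscr{A}=\operatorname{supp}(f)$, and let $\mathscr{B}\subseteq\mathbb{N}^n$ be a finite set of exponents. Let $f^1_{\mathrm{ts}}$ be the optimal value of $$\mathbf{P}^1_{\mathrm{ts}}:\quad\inf_{\mathbf{y}}\{L_{\mathbf{y}}(f):\ \mathbf{B}_{G^{(1)}}\circ\mathbf{M}_{\mathscr{B}}(\mathbf{y})\in\Pi_{G^{(1)}}(\mathbb{S}^+_{|\mathscr{B}|}),\ y_{\mathbf{0}}=1\}$$ and let $f_{\mathrm{sdsos}}=\sup\{b\in\mathbb{R}: f-b\in\mathrm{SDSOS}\}$. Then $f^1_{\mathrm{ts}}\ge f_{\mathrm{sdsos}}$.
   Context: A symmetric $t\times t$ matrix $\mathbf{G}$ is diagonally dominant if $\mathbf{G}_{ii}\ge\sum_{j\ne i}|\mathbf{G}_{ij}|$ for all $i$, and scaled diagonally dominant if $\mathbf{D}\mathbf{G}\mathbf{D}$ is diagonally dominant for some positive definite diagonal matrix $\mathbf{D}$. A polynomial $h$ belongs to $\mathrm{SDSOS}$ if $h=(\mathbf{x}^{\mathscr{B}})^\intercal\mathbf{G}\,\mathbf{x}^{\mathscr{B}}$ for some scaled diagonally dominant $\mathbf{G}$ indexed by $\mathscr{B}$, where $\mathbf{x}^{\mathscr{B}}=(\mathbf{x}^\beta)_{\beta\in\mathscr{B}}$. Graphs: a chordal extension $G'$ of $G$ is a chordal graph (every cycle of length $\ge4$ has a chord) on the same nodes containing $G$; chordal extensions are fixed so that $G\subseteq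 H$ implies $G'\subseteq H'$. For a graph $G$ with nodes $V\subseteq\mathbb{N}^n$, $\operatorname{supp}(G)=\{\beta+\gamma:\beta=\gamma\in V\text{ or }\{\beta,\gamma\}\in E(G)\}$. $G^{(0)}$ is the graph with nodes $\mathscr{B}$ and edges $\{\beta,\gamma\}$, $\beta\ne\gamma$, $\beta+\gamma\in\mathscr{A}\cup2\mathscr{B}$; $F^{(1)}$ has nodes $\mathscr{B}$ and edges $\{\beta,\gamma\}$, $\beta\ne\gamma$, $\beta+\gamma\in\operatorname{supp}(G^{(0)})$; $G^{(1)}=(F^{(1)})'$. $L_{\mathbf{y}}(\sum f_\alpha\mathbf{x}^\alpha)=\sum f_\alpha y_\alpha$; $\mathbf{M}_{\mathscr{B}}(\mathbf{y})$ is indexed by $\mathscr{B}$ with $(\beta,\gamma)$-entry $y_{\beta+\gamma}$. For a graph $G$ on nodes $V$: $\mathbb{S}(G)$ is the set of symmetric matrices indexed by $V$ vanishing off the pattern of $G$ (off-diagonal non-edges); $\Pi_G$ zeroes off-pattern entries; $\Pi_G(\mathbb{S}^+_{|V|})=\{\Pi_G(\mathbf{Q}):\mathbf{Q}\succeq0\}$; $\mathbf{B}_G$ is the adjacency matrix with unit diagonal; $\circ$ is the entrywise product. *)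

theory Defs
  imports "HOL-Library.Extended_Real"
begin

text \<open>Exponent vectors in N^n are functions 'v => nat with 'v a finite type (n = CARD('v)).
  Polynomials are coefficient functions with finite support. Matrices indexed by a finite
  set B of exponents are functions monom => monom => real (only entries on B x B matter).\<close>

type_synonym 'v monom = "'v \<Rightarrow> nat"

definition madd :: "'v monom \<Rightarrow> 'v monom \<Rightarrow> 'v monom" where
  "madd a b = (\<lambda>i. a i + b i)"

definition mzero :: "'v monom" where
  "mzero = (\<lambda>_. 0)"

definition poly_supp :: "('v monom \<Rightarrow> real) \<Rightarrow> 'v monom set" where
  "poly_supp f = {\<alpha>. f \<alpha> \<noteq> 0}"

definition Ly :: "('v monom \<Rightarrow> real) \<Rightarrow> ('v monom \<Rightarrow> real) \<Rightarrow> real" where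
  "Ly y f = (\<Sum>\<alpha>\<in>poly_supp f. f \<alpha> * y \<alpha>)"

text \<open>Gram-matrix representation: h = (x^B)^T G x^B.\<close>
definition gram_rep :: "'v monom set \<Rightarrow> ('v monom \<Rightarrow> 'v monom \<Rightarrow> real) \<Rightarrow> ('v monom \<Rightarrow> real) \<Rightarrow> bool" where
  "gram_rep B G h = (\<forall>\<alpha>. h \<alpha> = (\<Sum>p\<in>{(\<beta>,\<gamma>)\<in>B \<times> B. madd \<beta> \<gamma> = \<alpha>}. G (fst p) (snd p)))"

definition symmetric_on :: "'v monom set \<Rightarrow> ('v monom \<Rightarrow> 'v monom \<Rightarrow> real) \<Rightarrow> bool" where
  "symmetric_on B G = (\<forall>\<beta>\<in>B. \<forall>\<gamma>\<in>B. G \<beta> \<gamma> = G \<gamma> \<beta>)"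

definition diag_dominant :: "'v monom set \<Rightarrow> ('v monom \<Rightarrow> 'v monom \<Rightarrow> real) \<Rightarrow> bool" where
  "diag_dominant B G = (symmetric_on B G \<and>
     (\<forall>i\<in>B. G i i \<ge> (\<Sum>j\<in>B - {i}. \<bar>G i j\<bar>)))"

definition scaled_diag_dominant :: "'v monom set \<Rightarrow> ('v monom \<Rightarrow> 'v monom \<Rightarrow> real) \<Rightarrow> bool" where
  "scaled_diag_dominant B G = (symmetric_on B G \<and>
     (\<exists>d. (\<forall>i\<in>B. d i > 0) \<and> diag_dominant B (\<lambda>i j. d i * G i j * d j)))"

definition sdsos :: "'v monom set \<Rightarrow> ('v monom \<Rightarrow> real) \<Rightarrow> bool" where
  "sdsos B h = (\<exists>G. scaled_diag_dominant B G \<and> gram_rep B G h)"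

definition supp_graph :: "'v monom set \<Rightarrow> ('v monom \<Rightarrow> 'v monom \<Rightarrow> bool) \<Rightarrow> 'v monom set" where
  "supp_graph V E = {madd \<beta> \<gamma> | \<beta> \<gamma>. \<beta> \<in> V \<and> \<gamma> \<in> V \<and> (\<beta> = \<gamma> \<or> E \<beta> \<gamma>)}"

definition G0_edge :: "'v monom set \<Rightarrow> 'v monom set \<Rightarrow> 'v monom \<Rightarrow> 'v monom \<Rightarrow> bool" where
  "G0_edge A B \<beta> \<gamma> = (\<beta> \<in> B \<and> \<gamma> \<in> B \<and> \<beta> \<noteq> \<gamma> \<and>
      madd \<beta> \<gamma> \<in> A \<union> (\<lambda>b. madd b b) ` B)"

definition F1_edge :: "'v monom set \<Rightarrow> 'v monom set \<Rightarrow> 'v monom \<Rightarrow> 'v monom \<Rightarrow> bool" where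
  "F1_edge A B \<beta> \<gamma> = (\<beta> \<in> B \<and> \<gamma> \<in> B \<and> \<beta> \<noteq> \<gamma> \<and>
      madd \<beta> \<gamma> \<in> supp_graph B (G0_edge A B))"

definition chordal :: "'a set \<Rightarrow> ('a \<Rightarrow> 'a \<Rightarrow> bool) \<Rightarrow> bool" where
  "chordal V E = (\<forall>cs. distinct cs \<and> length cs \<ge> 4 \<and> set cs \<subseteq> V \<and>
      (\<forall>i<length cs. E (cs ! i) (cs ! ((i + 1) mod length cs))) \<longrightarrow>
      (\<exists>i<length cs. \<exists>j<length cs. i \<noteq> j \<and> j \<noteq> (i + 1) mod length cs \<and>
          i \<noteq> (j + 1) mod length cs \<and> E (cs ! i) (cs ! j)))"

definition chordal_extension :: "'a set \<Rightarrow> ('a \<Rightarrow> 'a \<Rightarrow> bool) \<Rightarrow> ('a \<Rightarrow> 'a \<Rightarrow> bool) \<Rightarrow> bool" where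
  "chordal_extension V E E' = ((\<forall>x y. E' x y \<longrightarrow> x \<in> V \<and> y \<in> V \<and> x \<noteq> y) \<and>
      (\<forall>x y. E' x y \<longrightarrow> E' y x) \<and> (\<forall>x y. E x y \<longrightarrow> E' x y) \<and> chordal V E')"

definition psd_on :: "'v monom set \<Rightarrow> ('v monom \<Rightarrow> 'v monom \<Rightarrow> real) \<Rightarrow> bool" where
  "psd_on B Q = (symmetric_on B Q \<and>
     (\<forall>u. 0 \<le> (\<Sum>\<beta>\<in>B. \<Sum>\<gamma>\<in>B. u \<beta> * Q \<beta> \<gamma> * u \<gamma>)))"

definition moment_mat :: "('v monom \<Rightarrow> real) \<Rightarrow> 'v monom \<Rightarrow> 'v monom \<Rightarrow> real" where
  "moment_mat y \<beta> \<gamma> = y (madd \<beta> \<gamma>)"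

definition adj_unit :: "('a \<Rightarrow> 'a \<Rightarrow> bool) \<Rightarrow> 'a \<Rightarrow> 'a \<Rightarrow> real" where
  "adj_unit E \<beta> \<gamma> = (if \<beta> = \<gamma> \<or> E \<beta> \<gamma> then 1 else 0)"

definition hadamard :: "('a \<Rightarrow> 'a \<Rightarrow> real) \<Rightarrow> ('a \<Rightarrow> 'a \<Rightarrow> real) \<Rightarrow> 'a \<Rightarrow> 'a \<Rightarrow> real" where
  "hadamard M N \<beta> \<gamma> = M \<beta> \<gamma> * N \<beta> \<gamma>"

definition proj_graph :: "('a \<Rightarrow> 'a \<Rightarrow> bool) \<Rightarrow> ('a \<Rightarrow> 'a \<Rightarrow> real) \<Rightarrow> 'a \<Rightarrow> 'a \<Rightarrow> real" where
  "proj_graph E Q \<beta> \<gamma> = (if \<beta> = \<gamma> \<or> E \<beta> \<gamma> then Q \<beta> \<gamma> else 0)"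

definition in_proj_psd :: "'v monom set \<Rightarrow> ('v monom \<Rightarrow> 'v monom \<Rightarrow> bool) \<Rightarrow> ('v monom \<Rightarrow> 'v monom \<Rightarrow> real) \<Rightarrow> bool" where
  "in_proj_psd B E M = (\<exists>Q. psd_on B Q \<and> (\<forall>\<beta>\<in>B. \<forall>\<gamma>\<in>B. M \<beta> \<gamma> = proj_graph E Q \<beta> \<gamma>))"

definition ts_feasible :: "'v monom set \<Rightarrow> ('v monom \<Rightarrow> 'v monom \<Rightarrow> bool) \<Rightarrow> ('v monom \<Rightarrow> real) \<Rightarrow> bool" where
  "ts_feasible B E y = (in_proj_psd B E (hadamard (adj_unit E) (moment_mat y)) \<and> y mzero = 1)"

end

(* Suppose f - b = (x^B)^T G x^B with G scaled
   diagonally dominant, and let y be feasible. Scaled diagonally dominant matrices pair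
   nonnegatively with every matrix whose 2x2 principal submatrices are positive semidefinite.
   The moment matrix of y need not be such a matrix, because its entries off the pattern of
   G^(1) are unconstrained; but they may be set to zero. If beta <> gamma and beta + gamma lies
   in supp(f) or in 2B, then {beta, gamma} is an edge of G^(0) and hence of G^(1), so there the
   moment y_(beta+gamma) is an entry of a PSD matrix Q; and moments outside
   supp(f) \<union> {0} \<union> 2B do not occur in L_y(f - b). Pairing G with the truncated moment matrix
   therefore yields L_y(f) - b \<ge> 0. *)

theory Submission
  imports Defs
begin

definition principal_2x2_psd_on :: "'a set \<Rightarrow> ('a \<Rightarrow> 'a \<Rightarrow> real) \<Rightarrow> bool" where
  "principal_2x2_psd_on B M =
     (\<forall>i\<in>B. \<forall>j\<in>B. \<forall>s t. 0 \<le> s * s * M i i + 2 * s * t * M i j + t * t * M j j)"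

lemma principal_2x2_psd_onD:
  assumes "principal_2x2_psd_on B M" "i \<in> B" "j \<in> B"
  shows "0 \<le> s * s * M i i + 2 * s * t * M i j + t * t * M j j"
  using assms unfolding principal_2x2_psd_on_def by blast

lemma principal_2x2_psd_on_diag_nonneg:
  assumes "principal_2x2_psd_on B M" "i \<in> B"
  shows "0 \<le> M i i"
  using principal_2x2_psd_onD[OF assms assms(2), where s = 1 and t = 0] by simp

lemma principal_2x2_psd_on_abs_le:
  assumes "principal_2x2_psd_on B M" "i \<in> B" "j \<in> B"
  shows "2 * \<bar>M i j\<bar> \<le> M i i + M j j"
  using principal_2x2_psd_onD[OF assms, where s = 1 and t = 1]
    principal_2x2_psd_onD[OF assms, where s = 1 and t = "-1"]
  by linarith

lemma principal_2x2_psd_on_scale: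
  assumes "principal_2x2_psd_on B M"
  shows "principal_2x2_psd_on B (\<lambda>i j. c i * M i j * c j)"
  unfolding principal_2x2_psd_on_def
proof (intro ballI allI)
  fix i j s t assume "i \<in> B" "j \<in> B"
  from principal_2x2_psd_onD[OF assms this, where s = "s * c i" and t = "t * c j"]
  show "0 \<le> s * s * (c i * M i i * c i) + 2 * s * t * (c i * M i j * c j) + t * t * (c j * M j j * c j)"
    by (simp add: algebra_simps)
qed

lemma principal_2x2_psd_on_zero_off_diag:
  assumes "principal_2x2_psd_on B Q"
    and "\<forall>i\<in>B. \<forall>j\<in>B. M i j = Q i j \<or> (i \<noteq> j \<and> M i j = 0)"
  shows "principal_2x2_psd_on B M"
  unfolding principal_2x2_psd_on_def
proof (intro ballI allI)
  fix i j s t assume ij: "i \<in> B" "j \<in> B"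
  have diag: "M i i = Q i i" "M j j = Q j j"
    using assms(2) ij by auto
  have "M i j = Q i j \<or> M i j = 0"
    using assms(2) ij by blast
  then show "0 \<le> s * s * M i i + 2 * s * t * M i j + t * t * M j j"
  proof
    assume "M i j = Q i j"
    then show ?thesis
      using principal_2x2_psd_onD[OF assms(1) ij] diag by simp
  next
    assume "M i j = 0"
    moreover have "0 \<le> s * s * Q i i" "0 \<le> t * t * Q j j"
      using principal_2x2_psd_on_diag_nonneg[OF assms(1)] ij by simp_all
    ultimately show ?thesis
      using diag by simp
  qed
qed

lemma psd_on_imp_principal_2x2_psd_on:
  assumes "finite B" "psd_on B Q"
  shows "principal_2x2_psd_on B Q"
  unfolding principal_2x2_psd_on_def
proof (intro ballI allI)
  fix i j and s t :: real assume ij: "i \<in> B" "j \<in> B"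
  define u where "u k = (if k = i then s else 0) + (if k = j then t else 0)" for k
  have pick: "(\<Sum>k\<in>B. g k * u k) = s * g i + t * g j" for g
    using assms(1) ij by (simp add: u_def distrib_left sum.distrib if_distrib[of "(*) _"] cong: if_cong)
  have "(\<Sum>\<beta>\<in>B. \<Sum>\<gamma>\<in>B. u \<beta> * Q \<beta> \<gamma> * u \<gamma>) = (\<Sum>\<beta>\<in>B. (\<Sum>\<gamma>\<in>B. Q \<beta> \<gamma> * u \<gamma>) * u \<beta>)"
    by (simp add: sum_distrib_left sum_distrib_right mult_ac)
  also have "\<dots> = (\<Sum>\<beta>\<in>B. (s * Q \<beta> i + t * Q \<beta> j) * u \<beta>)"
    by (simp only: pick)
  also have "\<dots> = s * (s * Q i i + t * Q i j) + t * (s * Q j i + t * Q j j)"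
    by (rule pick)
  also have "\<dots> = s * s * Q i i + 2 * s * t * Q i j + t * t * Q j j"
  proof -
    have "Q j i = Q i j"
      using assms(2) ij unfolding psd_on_def symmetric_on_def by blast
    then show ?thesis by (simp add: algebra_simps)
  qed
  finally show "0 \<le> s * s * Q i i + 2 * s * t * Q i j + t * t * Q j j"
    using assms(2)[unfolded psd_on_def, THEN conjunct2, rule_format, of u] by simp
qed

lemma diag_dominant_pairing_nonneg:
  assumes fin: "finite B" and dd: "diag_dominant B H" and N: "principal_2x2_psd_on B N"
  shows "0 \<le> (\<Sum>i\<in>B. \<Sum>j\<in>B. H i j * N i j)"
proof -
  have sym: "H i j = H j i" if "i \<in> B" "j \<in> B" for i j
    using dd that unfolding diag_dominant_def symmetric_on_def by blast
  have row: "- (\<Sum>j\<in>B-{i}. \<bar>H i j\<bar> * (N i i + N j j)) / 2 \<le> (\<Sum>j\<in>B-{i}. H i j * N i j)"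
    if i: "i \<in> B" for i
  proof -
    have "- (\<Sum>j\<in>B-{i}. \<bar>H i j\<bar> * (N i i + N j j)) / 2 = (\<Sum>j\<in>B-{i}. - (\<bar>H i j\<bar> * (N i i + N j j)) / 2)"
      by (simp add: sum_negf sum_divide_distrib)
    also have "\<dots> \<le> (\<Sum>j\<in>B-{i}. H i j * N i j)"
    proof (rule sum_mono)
      fix j assume "j \<in> B - {i}"
      then have "2 * \<bar>H i j * N i j\<bar> \<le> \<bar>H i j\<bar> * (N i i + N j j)"
        using mult_left_mono[OF principal_2x2_psd_on_abs_le[OF N i], of j "\<bar>H i j\<bar>"]
        by (simp add: abs_mult)
      then show "- (\<bar>H i j\<bar> * (N i i + N j j)) / 2 \<le> H i j * N i j"
        using abs_ge_minus_self[of "H i j * N i j"] by linarith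
    qed
    finally show ?thesis .
  qed
  have swap: "(\<Sum>i\<in>B. \<Sum>j\<in>B-{i}. \<bar>H i j\<bar> * N j j) = (\<Sum>i\<in>B. \<Sum>j\<in>B-{i}. \<bar>H i j\<bar> * N i i)"
  proof -
    have "(\<Sum>i\<in>B. \<Sum>j\<in>{j. j \<in> B \<and> i \<noteq> j}. \<bar>H i j\<bar> * N j j)
        = (\<Sum>j\<in>B. \<Sum>i\<in>{i. i \<in> B \<and> i \<noteq> j}. \<bar>H i j\<bar> * N j j)"
      by (rule sum.swap_restrict[OF fin fin])
    also have "\<dots> = (\<Sum>j\<in>B. \<Sum>i\<in>{i. i \<in> B \<and> j \<noteq> i}. \<bar>H j i\<bar> * N j j)"
      using sym by (intro sum.cong) auto
    finally show ?thesis by (simp add: set_diff_eq eq_commute)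
  qed
  have "0 \<le> (\<Sum>i\<in>B. N i i * (H i i - (\<Sum>j\<in>B-{i}. \<bar>H i j\<bar>)))"
    using dd principal_2x2_psd_on_diag_nonneg[OF N] unfolding diag_dominant_def
    by (intro sum_nonneg mult_nonneg_nonneg) auto
  also have "\<dots> = (\<Sum>i\<in>B. H i i * N i i) - (\<Sum>i\<in>B. \<Sum>j\<in>B-{i}. \<bar>H i j\<bar> * N i i)"
    by (simp add: right_diff_distrib sum_subtractf sum_distrib_left mult.commute)
  also have "\<dots> = (\<Sum>i\<in>B. H i i * N i i)
      - ((\<Sum>i\<in>B. \<Sum>j\<in>B-{i}. \<bar>H i j\<bar> * N i i) + (\<Sum>i\<in>B. \<Sum>j\<in>B-{i}. \<bar>H i j\<bar> * N j j)) / 2"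
    by (simp add: swap)
  also have "\<dots> = (\<Sum>i\<in>B. H i i * N i i - (\<Sum>j\<in>B-{i}. \<bar>H i j\<bar> * (N i i + N j j)) / 2)"
    by (simp add: sum_subtractf distrib_left sum.distrib flip: sum_divide_distrib)
  also have "\<dots> \<le> (\<Sum>i\<in>B. H i i * N i i + (\<Sum>j\<in>B-{i}. H i j * N i j))"
  proof (rule sum_mono)
    fix i assume "i \<in> B"
    from row[OF this] show "H i i * N i i - (\<Sum>j\<in>B-{i}. \<bar>H i j\<bar> * (N i i + N j j)) / 2
        \<le> H i i * N i i + (\<Sum>j\<in>B-{i}. H i j * N i j)" by linarith
  qed
  also have "\<dots> = (\<Sum>i\<in>B. \<Sum>j\<in>B. H i j * N i j)"
    using fin by (simp add: sum.remove)
  finally show ?thesis .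
qed

lemma scaled_diag_dominant_pairing_nonneg:
  assumes "finite B" "scaled_diag_dominant B G" "principal_2x2_psd_on B M"
  shows "0 \<le> (\<Sum>i\<in>B. \<Sum>j\<in>B. G i j * M i j)"
proof -
  obtain d where d: "\<forall>i\<in>B. d i > 0" and dd: "diag_dominant B (\<lambda>i j. d i * G i j * d j)"
    using assms(2) unfolding scaled_diag_dominant_def by blast
  have "0 \<le> (\<Sum>i\<in>B. \<Sum>j\<in>B. (d i * G i j * d j) * (1 / d i * M i j * (1 / d j)))"
    using diag_dominant_pairing_nonneg[OF assms(1) dd principal_2x2_psd_on_scale[OF assms(3)]] .
  also have "\<dots> = (\<Sum>i\<in>B. \<Sum>j\<in>B. G i j * M i j)"
  proof (intro sum.cong refl)
    fix i j assume "i \<in> B" "j \<in> B"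
    then have "d i \<noteq> 0" "d j \<noteq> 0"
      using d by auto
    then show "d i * G i j * d j * (1 / d i * M i j * (1 / d j)) = G i j * M i j"
      by (simp add: field_simps)
  qed
  finally show ?thesis .
qed

lemma madd_eq_mzero_iff: "madd a b = mzero \<longleftrightarrow> a = mzero \<and> b = mzero"
  by (auto simp: madd_def mzero_def fun_eq_iff)

lemma G0_edge_imp_F1_edge: "G0_edge A B \<beta> \<gamma> \<Longrightarrow> F1_edge A B \<beta> \<gamma>"
  unfolding F1_edge_def supp_graph_def G0_edge_def by blast

lemma ts_feasibleE:
  assumes "ts_feasible B E y"
  obtains Q where "psd_on B Q"
    and "\<And>i j. i \<in> B \<Longrightarrow> j \<in> B \<Longrightarrow> i = j \<or> E i j \<Longrightarrow> y (madd i j) = Q i j"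
    and "y mzero = 1"
proof -
  obtain Q where psd: "psd_on B Q"
    and proj: "\<forall>i\<in>B. \<forall>j\<in>B. hadamard (adj_unit E) (moment_mat y) i j = proj_graph E Q i j"
    and y0: "y mzero = 1"
    using assms unfolding ts_feasible_def in_proj_psd_def by blast
  have "y (madd i j) = Q i j" if "i \<in> B" "j \<in> B" "i = j \<or> E i j" for i j
    using proj[rule_format, OF that(1,2)] that(3)
    by (auto simp: hadamard_def adj_unit_def proj_graph_def moment_mat_def)
  from psd this y0 show thesis
    by (rule that)
qed

lemma restricted_moment_principal_2x2_psd_on:
  fixes A B :: "'v monom set"
  defines "S \<equiv> A \<union> {mzero} \<union> (\<lambda>\<beta>. madd \<beta> \<beta>) ` B"
  assumes fin: "finite B" and feas: "ts_feasible B E y"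
    and F1_sub: "\<And>\<beta> \<gamma>. F1_edge A B \<beta> \<gamma> \<Longrightarrow> E \<beta> \<gamma>"
  shows "principal_2x2_psd_on B (moment_mat (\<lambda>\<alpha>. if \<alpha> \<in> S then y \<alpha> else 0))"
proof -
  obtain Q where psd: "psd_on B Q"
    and yQ: "\<And>i j. i \<in> B \<Longrightarrow> j \<in> B \<Longrightarrow> i = j \<or> E i j \<Longrightarrow> y (madd i j) = Q i j"
    using ts_feasibleE[OF feas] by metis
  let ?z = "\<lambda>\<alpha>. if \<alpha> \<in> S then y \<alpha> else 0"
  have "\<forall>i\<in>B. \<forall>j\<in>B. moment_mat ?z i j = Q i j \<or> (i \<noteq> j \<and> moment_mat ?z i j = 0)"
  proof (intro ballI)
    fix i j assume i: "i \<in> B" and j: "j \<in> B"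
    show "moment_mat ?z i j = Q i j \<or> (i \<noteq> j \<and> moment_mat ?z i j = 0)"
    proof (cases "madd i j \<in> S")
      case True
      have "i = j \<or> E i j"
      proof (cases "i = j")
        case False
        with True have "madd i j \<in> A \<union> (\<lambda>\<beta>. madd \<beta> \<beta>) ` B"
          unfolding S_def using madd_eq_mzero_iff[of i j] by auto
        with i j False have "G0_edge A B i j"
          unfolding G0_edge_def by blast
        then show ?thesis
          by (blast intro: F1_sub G0_edge_imp_F1_edge)
      qed simp
      then show ?thesis
        using True yQ i j by (simp add: moment_mat_def)
    next
      case False
      then have "i \<noteq> j"
        using i unfolding S_def by auto
      with False show ?thesis
        by (simp add: moment_mat_def)
    qed
  qed
  then show ?thesis
    by (rule principal_2x2_psd_on_zero_off_diag[OF psd_on_imp_principal_2x2_psd_on[OF fin psd]])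
qed

lemma gram_rep_pairing:
  assumes gram: "gram_rep B G h" and "finite B" "finite T"
    and "(\<lambda>(\<beta>, \<gamma>). madd \<beta> \<gamma>) ` (B \<times> B) \<subseteq> T"
  shows "(\<Sum>\<beta>\<in>B. \<Sum>\<gamma>\<in>B. G \<beta> \<gamma> * z (madd \<beta> \<gamma>)) = (\<Sum>\<alpha>\<in>T. h \<alpha> * z \<alpha>)"
proof -
  have "(\<Sum>\<beta>\<in>B. \<Sum>\<gamma>\<in>B. G \<beta> \<gamma> * z (madd \<beta> \<gamma>)) = (\<Sum>(\<beta>, \<gamma>)\<in>B \<times> B. G \<beta> \<gamma> * z (madd \<beta> \<gamma>))"
    by (simp add: sum.cartesian_product)
  also have "\<dots> = (\<Sum>\<alpha>\<in>T. \<Sum>(\<beta>, \<gamma>)\<in>{p \<in> B \<times> B. (\<lambda>(\<beta>, \<gamma>). madd \<beta> \<gamma>) p = \<alpha>}. G \<beta> \<gamma> * z (madd \<beta> \<gamma>))"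
    using assms(2-4) by (simp add: sum.group)
  also have "\<dots> = (\<Sum>\<alpha>\<in>T. (\<Sum>(\<beta>, \<gamma>)\<in>{(\<beta>, \<gamma>) \<in> B \<times> B. madd \<beta> \<gamma> = \<alpha>}. G \<beta> \<gamma>) * z \<alpha>)"
    by (intro sum.cong refl) (auto simp: sum_distrib_right intro!: sum.cong)
  also have "\<dots> = (\<Sum>\<alpha>\<in>T. h \<alpha> * z \<alpha>)"
    using gram unfolding gram_rep_def by (simp add: case_prod_beta)
  finally show ?thesis .
qed

lemma Ly_eq_sum_superset:
  assumes "finite T" "poly_supp f \<subseteq> T"
  shows "Ly y f = (\<Sum>\<alpha>\<in>T. f \<alpha> * y \<alpha>)"
  unfolding Ly_def using assms by (intro sum.mono_neutral_left) (auto simp: poly_supp_def)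

lemma gram_rep_pairing_eq_Ly:
  assumes gram: "gram_rep B G (\<lambda>\<alpha>. f \<alpha> - (if \<alpha> = mzero then b else 0))"
    and "finite B" "finite (poly_supp f)"
    and agree: "\<And>\<alpha>. \<alpha> \<in> poly_supp f \<union> {mzero} \<Longrightarrow> z \<alpha> = y \<alpha>"
  shows "(\<Sum>\<beta>\<in>B. \<Sum>\<gamma>\<in>B. G \<beta> \<gamma> * z (madd \<beta> \<gamma>)) = Ly y f - b * y mzero"
proof -
  define T where "T = poly_supp f \<union> {mzero} \<union> (\<lambda>(\<beta>, \<gamma>). madd \<beta> \<gamma>) ` (B \<times> B)"
  have finT: "finite T"
    using assms(2,3) by (simp add: T_def)
  have "(\<Sum>\<beta>\<in>B. \<Sum>\<gamma>\<in>B. G \<beta> \<gamma> * z (madd \<beta> \<gamma>)) = (\<Sum>\<alpha>\<in>T. (f \<alpha> - (if \<alpha> = mzero then b else 0)) * z \<alpha>)"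
    using gram assms(2) finT by (rule gram_rep_pairing) (auto simp: T_def)
  also have "\<dots> = (\<Sum>\<alpha>\<in>T. (f \<alpha> - (if \<alpha> = mzero then b else 0)) * y \<alpha>)"
  proof (intro sum.cong refl)
    fix \<alpha>
    show "(f \<alpha> - (if \<alpha> = mzero then b else 0)) * z \<alpha> = (f \<alpha> - (if \<alpha> = mzero then b else 0)) * y \<alpha>"
      by (cases "\<alpha> \<in> poly_supp f \<union> {mzero}") (auto simp: agree poly_supp_def)
  qed
  also have "\<dots> = (\<Sum>\<alpha>\<in>T. f \<alpha> * y \<alpha>) - b * y mzero"
    using finT by (simp add: left_diff_distrib sum_subtractf if_distrib[of "\<lambda>x. x * _"] T_def cong: if_cong)
  also have "\<dots> = Ly y f - b * y mzero"
  proof -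
    have "poly_supp f \<subseteq> T"
      unfolding T_def by blast
    then show ?thesis
      using Ly_eq_sum_superset[OF finT] by simp
  qed
  finally show ?thesis .
qed

theorem theorem7p3:
  fixes f :: "('v::finite) monom \<Rightarrow> real"
    and B :: "'v monom set"
    and E1 :: "'v monom \<Rightarrow> 'v monom \<Rightarrow> bool"
  assumes "finite (poly_supp f)"
    and "finite B"
    and "chordal_extension B (F1_edge (poly_supp f) B) E1"
  shows "(SUP b\<in>{b::real. sdsos B (\<lambda>\<alpha>. f \<alpha> - (if \<alpha> = mzero then b else 0))}. ereal b)
         \<le> (INF y\<in>{y. ts_feasible B E1 y}. ereal (Ly y f))"
proof (intro SUP_least INF_greatest)
  fix b :: real and y :: "'v monom \<Rightarrow> real"
  define z where "z = (\<lambda>\<alpha>. if \<alpha> \<in> poly_supp f \<union> {mzero} \<union> (\<lambda>\<beta>. madd \<beta> \<beta>) ` B then y \<alpha> else 0)"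
  assume "b \<in> {b. sdsos B (\<lambda>\<alpha>. f \<alpha> - (if \<alpha> = mzero then b else 0))}"
  then obtain G where sdd: "scaled_diag_dominant B G"
    and gram: "gram_rep B G (\<lambda>\<alpha>. f \<alpha> - (if \<alpha> = mzero then b else 0))"
    unfolding sdsos_def by blast
  assume "y \<in> {y. ts_feasible B E1 y}"
  then have feas: "ts_feasible B E1 y" and y0: "y mzero = 1"
    unfolding ts_feasible_def by auto
  have F1_sub: "F1_edge (poly_supp f) B \<beta> \<gamma> \<Longrightarrow> E1 \<beta> \<gamma>" for \<beta> \<gamma>
    using assms(3) unfolding chordal_extension_def by blast
  have "0 \<le> (\<Sum>\<beta>\<in>B. \<Sum>\<gamma>\<in>B. G \<beta> \<gamma> * z (madd \<beta> \<gamma>))"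
    using scaled_diag_dominant_pairing_nonneg[OF assms(2) sdd
        restricted_moment_principal_2x2_psd_on[OF assms(2) feas F1_sub]]
    by (simp add: moment_mat_def z_def)
  also have "\<dots> = Ly y f - b"
  proof -
    have agree: "z \<alpha> = y \<alpha>" if "\<alpha> \<in> poly_supp f \<union> {mzero}" for \<alpha>
      using that unfolding z_def by auto
    from gram_rep_pairing_eq_Ly[where z = z and y = y, OF gram assms(2,1) agree] y0 show ?thesis
      by simp
  qed
  finally show "ereal b \<le> ereal (Ly y f)"
    by simp
qed

end
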